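(* Let $T>0$, let $f:(0,T)\to\mathbb{R}$ be nondecreasing and $g:(0,T)\to\mathbb{R}$ be of bounded variation, both left-continuous and bounded, with $f(t)\ge g(t)$ for all $t\in(0,T)$. Suppose there is a constant $C>0$ such that: (i) for every $\varepsilon>0$, every $t\in(0,T)$ with $f(t)>g(t)+\varepsilon$, and every $t'\in(0,T)$ with $0\le t'-t<\frac{\varepsilon}{C}$, one has $f(t')=f(t)$ and $f(t')>g(t')$; (ii) $f(t^+)-f(t)=[g(t^+)-g(t)]^+$ for every $t\in(0,T)$; (iii) $g(t_2)-g(t_1)\le C(t_2-t_1)$ for all $t_1<t_2$ in $[a,b)$ whenever $[a,b)\subset\{f>g\}$. Then the measure $\partial_tf$ is concentrated on $\{f=g\}$, and $\partial_tf(E)=(\partial_tg)^+(E)$ for every Borel set $E\subset\{f=g\}$.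
   Context: $\partial_tf$ is the Radon measure with $\partial_tf([a,b))=f(b)-f(a)$ for $[a,b)\subset(0,T)$; $\partial_tg$ is the distributional derivative of $g$ (a finite signed measure) and $(\partial_tg)^+$ its positive part, so that $(\partial_tg)^+([a,b))=\sup\{\sum_{i=1}^m(g(t_i)-g(t_{i-1}))^+:a=t_0<\dots<t_m=b\}$. $h(t^+)$ denotes the right limit. *)

theory Defs
  imports "HOL-Analysis.Analysis"
begin

definition is_partition :: "real \<Rightarrow> real \<Rightarrow> nat \<Rightarrow> (nat \<Rightarrow> real) \<Rightarrow> bool" where
  "is_partition a b m t \<longleftrightarrow> t 0 = a \<and> t m = b \<and> (\<forall>i<m. t i < t (Suc i))"

definition bounded_variation_on :: "(real \<Rightarrow> real) \<Rightarrow> real set \<Rightarrow> bool" where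
  "bounded_variation_on g S \<longleftrightarrow>
     (\<exists>B. \<forall>m t. (\<forall>i\<le>m. t i \<in> S) \<and> (\<forall>i<m. t i < t (Suc i)) \<longrightarrow>
          (\<Sum>i\<in>{1..m}. \<bar>g (t i) - g (t (i - 1))\<bar>) \<le> B)"

definition pos_var :: "(real \<Rightarrow> real) \<Rightarrow> real \<Rightarrow> real \<Rightarrow> real" where
  "pos_var g a b = Sup {(\<Sum>i\<in>{1..m}. max (g (t i) - g (t (i - 1))) 0) | m t. is_partition a b m t}"

end

theory Submission
  imports Defs
begin

text \<open>On the gap \<open>{f > g}\<close>, hypothesis (i) makes \<open>f\<close> constant to the right of every point,
  and left continuity propagates this: \<open>f\<close> is constant on \<open>[x, y]\<close> whenever \<open>[x, y)\<close> lies in the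
  gap. So the gap, a countable union of such intervals, is \<open>\<partial>\<^sub>tf\<close>-null.

  On an interval \<open>[a, b)\<close> meeting the contact set \<open>{f = g}\<close>, let \<open>q \<le> r\<close> be its first and last
  contact points. Then \<open>f b - f a = (f b - f r) + (g r - g q)\<close>, where \<open>f b - f r\<close> is the jump (ii)
  at \<open>r\<close>; both terms are dominated by the positive variation, so \<open>\<partial>\<^sub>tf \<le> (\<partial>\<^sub>tg)\<^sup>+\<close> on intervals.
  Conversely, the slope bound (iii) shows that every increment of \<open>g\<close> is at most the increment
  of \<open>f\<close> plus \<open>C\<close> times the length of the gap in between, so \<open>(\<partial>\<^sub>tg)\<^sup>+ \<le> \<partial>\<^sub>tf + C \<lambda>\<close>
  restricted to the gap. Both inequalities pass from intervals to all Borel sets, and on the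
  contact set the last measure vanishes.\<close>

section \<open>Comparing finite measures through half-open intervals\<close>

definition add_measure :: "'a measure \<Rightarrow> 'a measure \<Rightarrow> 'a measure" where
  "add_measure M N = measure_of (space M) (sets M) (\<lambda>A. emeasure M A + emeasure N A)"

lemma sets_add_measure [simp, measurable_cong]: "sets (add_measure M N) = sets M"
  by (simp add: add_measure_def)

lemma emeasure_add_measure:
  assumes "sets N = sets M" "A \<in> sets M"
  shows "emeasure (add_measure M N) A = emeasure M A + emeasure N A"
  unfolding add_measure_def
proof (rule emeasure_measure_of_sigma)
  show "sigma_algebra (space M) (sets M)" ..
  show "positive (sets M) (\<lambda>A. emeasure M A + emeasure N A)"
    by (simp add: positive_def)
  show "countably_additive (sets M) (\<lambda>A. emeasure M A + emeasure N A)"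
    unfolding countably_additive_def
  proof (intro allI impI)
    fix F :: "nat \<Rightarrow> 'a set"
    assume F: "range F \<subseteq> sets M" "disjoint_family F" "\<Union> (range F) \<in> sets M"
    then show "(\<Sum>i. emeasure M (F i) + emeasure N (F i)) = emeasure M (\<Union> (range F)) + emeasure N (\<Union> (range F))"
      using assms(1) by (simp add: suminf_add[symmetric] suminf_emeasure)
  qed
qed fact

lemma countably_additive_emeasure_diff:
  assumes sets: "G \<subseteq> sets M" "G \<subseteq> sets N"
    and fin: "\<And>A. A \<in> G \<Longrightarrow> emeasure N A \<noteq> \<infinity>"
    and le: "\<And>A. A \<in> G \<Longrightarrow> emeasure M A \<le> emeasure N A"
  shows "countably_additive G (\<lambda>A. emeasure N A - emeasure M A)"
  unfolding countably_additive_def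
proof (intro allI impI)
  fix F :: "nat \<Rightarrow> 'a set"
  assume F: "range F \<subseteq> G" "disjoint_family F" "\<Union> (range F) \<in> G"
  have sum_M: "(\<Sum>i. emeasure M (F i)) = emeasure M (\<Union> (range F))"
    and sum_N: "(\<Sum>i. emeasure N (F i)) = emeasure N (\<Union> (range F))"
    using sets F by (auto intro!: suminf_emeasure)
  have "emeasure M (\<Union> (range F)) \<noteq> \<infinity>"
    using fin[OF F(3)] le[OF F(3)] by (auto simp: top_unique)
  then show "(\<Sum>i. emeasure N (F i) - emeasure M (F i)) = emeasure N (\<Union> (range F)) - emeasure M (\<Union> (range F))"
    using le F fin[OF F(3)] sum_M sum_N by (subst ennreal_suminf_minus) (auto simp: top_unique)
qed

text \<open>The difference \<open>N - M\<close> is countably additive on the generator, so by Caratheodory it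
  extends to a measure \<open>R\<close> with \<open>M + R = N\<close>.\<close>
lemma emeasure_le_of_semiring_generator:
  assumes G: "semiring_of_sets \<Omega> G" "\<Omega> \<in> G"
    and sets_M: "sets M = sigma_sets \<Omega> G" and sets_N: "sets N = sigma_sets \<Omega> G"
    and fin: "emeasure N \<Omega> \<noteq> \<infinity>"
    and le: "\<And>A. A \<in> G \<Longrightarrow> emeasure M A \<le> emeasure N A"
    and A: "A \<in> sets M"
  shows "emeasure M A \<le> emeasure N A"
proof -
  interpret G: semiring_of_sets \<Omega> G by fact
  have in_sigma: "A \<in> G \<Longrightarrow> A \<in> sigma_sets \<Omega> G" for A by auto
  have fin_N: "emeasure N A \<noteq> \<infinity>" if "A \<in> sigma_sets \<Omega> G" for A
  proof -
    have "emeasure N A \<le> emeasure N \<Omega>"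
      using that G(2) sets_N by (intro emeasure_mono) (auto dest: sigma_sets_into_sp[OF G.space_closed])
    then show ?thesis using fin by (auto simp: top_unique)
  qed
  have fin_M: "emeasure M A \<noteq> \<infinity>" if "A \<in> G" for A
    using fin_N[OF in_sigma[OF that]] le[OF that] by (auto simp: top_unique)
  define \<rho> where "\<rho> A = emeasure N A - emeasure M A" for A
  have "countably_additive G \<rho>"
    unfolding \<rho>_def using sets_M sets_N fin_N in_sigma le
    by (intro countably_additive_emeasure_diff) auto
  then obtain \<rho>' where \<rho>': "\<forall>A\<in>G. \<rho>' A = \<rho> A" "measure_space \<Omega> (sigma_sets \<Omega> G) \<rho>'"
    using G.caratheodory[of \<rho>] by (auto simp: positive_def \<rho>_def)
  define R where "R = measure_of \<Omega> (sigma_sets \<Omega> G) \<rho>'"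
  have sets_R: "sets R = sigma_sets \<Omega> G"
    unfolding R_def using sigma_sets_into_sp[OF G.space_closed]
    by (subst sets_measure_of) (auto simp: sigma_sets_sigma_sets_eq G.space_closed)
  have emeasure_R: "emeasure R A = \<rho> A" if "A \<in> G" for A
    unfolding R_def using \<rho>' that
    by (subst emeasure_measure_of_sigma) (auto simp: measure_space_def)
  have "add_measure M R = N"
  proof (rule measure_eqI_generator_eq[where A="\<lambda>_. \<Omega>"])
    show "Int_stable G" by (auto simp: Int_stable_def)
    show "G \<subseteq> Pow \<Omega>" by (rule G.space_closed)
    show "emeasure (add_measure M R) X = emeasure N X" if "X \<in> G" for X
      using that le[OF that] fin_N[OF in_sigma[OF that]] sets_M sets_R
      by (simp add: emeasure_add_measure emeasure_R \<rho>_def le_add_diff_inverse)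
    show "sets (add_measure M R) = sigma_sets \<Omega> G" "sets N = sigma_sets \<Omega> G"
      using sets_M sets_N by simp_all
    show "range (\<lambda>_. \<Omega>) \<subseteq> G" "(\<Union>_. \<Omega>) = \<Omega>" using G(2) by auto
    show "emeasure (add_measure M R) \<Omega> \<noteq> \<infinity>" for i :: nat
      using G(2) sets_M sets_R le[OF G(2)] fin fin_M[OF G(2)]
      by (simp add: emeasure_add_measure emeasure_R \<rho>_def le_add_diff_inverse)
  qed
  then have "emeasure N A = emeasure M A + emeasure R A"
    using A sets_M sets_R by (auto simp: emeasure_add_measure)
  then show ?thesis by simp
qed

lemma semiring_of_sets_Int_Ico:
  "semiring_of_sets \<Omega> (range (\<lambda>(a, b). \<Omega> \<inter> {a..<b::real}))"
proof
  show "range (\<lambda>(a, b). \<Omega> \<inter> {a..<b}) \<subseteq> Pow \<Omega>" by auto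
  show "{} \<in> range (\<lambda>(a, b). \<Omega> \<inter> {a..<b})"
    by (rule image_eqI[of _ _ "(1, 0)"]) auto
  fix A B assume "A \<in> range (\<lambda>(a, b). \<Omega> \<inter> {a..<b})" "B \<in> range (\<lambda>(a, b). \<Omega> \<inter> {a..<b})"
  then obtain a b c d where A: "A = \<Omega> \<inter> {a..<b}" and B: "B = \<Omega> \<inter> {c..<d}" by auto
  show "A \<inter> B \<in> range (\<lambda>(a, b). \<Omega> \<inter> {a..<b})"
    by (rule image_eqI[of _ _ "(max a c, min b d)"]) (auto simp: A B)
  show "\<exists>D\<subseteq>range (\<lambda>(a, b). \<Omega> \<inter> {a..<b}). finite D \<and> disjoint D \<and> A - B = \<Union>D"
  proof (cases "c < d")
    case False
    then show ?thesis using \<open>A \<in> _\<close> by (intro exI[of _ "{A}"]) (auto simp: A B)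
  next
    case True
    show ?thesis
    proof (intro exI conjI)
      let ?D = "{\<Omega> \<inter> {a..<min b c}, \<Omega> \<inter> {max a d..<b}}"
      show "?D \<subseteq> range (\<lambda>(a, b). \<Omega> \<inter> {a..<b})" by auto
      show "disjoint ?D" using True by (auto simp: disjoint_def)
      show "A - B = \<Union>?D" by (auto simp: A B)
    qed simp
  qed
qed

lemma sets_restrict_space_borel_Int_Ico:
  assumes "\<Omega> \<in> sets borel"
  shows "sets (restrict_space borel \<Omega>) = sigma_sets \<Omega> (range (\<lambda>(a, b). \<Omega> \<inter> {a..<b::real}))"
proof -
  have borel: "sets borel = sigma_sets UNIV (range (\<lambda>(a, b). {a..<b::real}))"
    by (subst borel_eq_atLeastLessThan) (simp add: sets_measure_of)
  have "sets (restrict_space borel \<Omega>) = (\<inter>) \<Omega> ` sigma_sets UNIV (range (\<lambda>(a, b). {a..<b::real}))"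
    by (simp only: sets_restrict_space borel)
  also have "\<dots> = sigma_sets \<Omega> ((\<inter>) \<Omega> ` range (\<lambda>(a, b). {a..<b}))"
    using assms borel by (intro sigma_sets_Int) auto
  finally show ?thesis by (simp add: image_image case_prod_beta')
qed

lemma Ioo_Int_Ico_eq_UN_Ico:
  fixes l u a b :: real
  shows "{l<..<u} \<inter> {a..<b} = (\<Union>n. {max a (l + 1 / Suc n)..<min b (u - 1 / Suc n)})"
proof
  show "{l<..<u} \<inter> {a..<b} \<subseteq> (\<Union>n. {max a (l + 1 / Suc n)..<min b (u - 1 / Suc n)})"
  proof
    fix x assume x: "x \<in> {l<..<u} \<inter> {a..<b}"
    then have "0 < min (x - l) (u - x)" by auto
    then obtain n where "inverse (real (Suc n)) < min (x - l) (u - x)"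
      using reals_Archimedean by blast
    then show "x \<in> (\<Union>n. {max a (l + 1 / Suc n)..<min b (u - 1 / Suc n)})"
      using x by (auto simp: inverse_eq_divide intro!: exI[of _ n])
  qed
  show "(\<Union>n. {max a (l + 1 / Suc n)..<min b (u - 1 / Suc n)}) \<subseteq> {l<..<u} \<inter> {a..<b}"
  proof
    fix x assume "x \<in> (\<Union>n. {max a (l + 1 / Suc n)..<min b (u - 1 / Suc n)})"
    then obtain n where "a \<le> x" "l + 1 / Suc n \<le> x" "x < b" "x < u - 1 / Suc n" by auto
    moreover have "0 < 1 / real (Suc n)" by simp
    ultimately have "l < x" "x < u" "a \<le> x" "x < b" by linarith+
    then show "x \<in> {l<..<u} \<inter> {a..<b}" by auto
  qed
qed

lemma emeasure_Ioo_Int_Ico_le: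
  fixes l u a b :: real
  assumes sets_M: "sets M = sets (restrict_space borel {l<..<u})"
    and le: "\<And>a' b'. a \<le> a' \<Longrightarrow> b' \<le> b \<Longrightarrow> l < a' \<Longrightarrow> a' < b' \<Longrightarrow> b' < u \<Longrightarrow> emeasure M {a'..<b'} \<le> c"
  shows "emeasure M ({l<..<u} \<inter> {a..<b}) \<le> c"
proof -
  define P where "P n = {max a (l + 1 / Suc n)..<min b (u - 1 / Suc n)}" for n :: nat
  have UN_P: "{l<..<u} \<inter> {a..<b} = (\<Union>n. P n)"
    unfolding P_def by (rule Ioo_Int_Ico_eq_UN_Ico)
  have "incseq P"
  proof (rule monoI)
    fix n m :: nat assume "n \<le> m"
    then have "1 / real (Suc m) \<le> 1 / real (Suc n)" by (simp add: frac_le)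
    then show "P n \<subseteq> P m" by (auto simp: P_def)
  qed
  moreover have "P n \<in> sets M" for n
    unfolding sets_M using UN_P by (subst sets_restrict_space_iff) (auto simp: P_def)
  ultimately have "emeasure M ({l<..<u} \<inter> {a..<b}) = (SUP n. emeasure M (P n))"
    using SUP_emeasure_incseq[of P M] UN_P by (auto simp: image_subset_iff)
  also have "\<dots> \<le> c"
  proof (rule SUP_least)
    fix n
    show "emeasure M (P n) \<le> c"
    proof (cases "P n = {}")
      case False
      then have "max a (l + 1 / Suc n) < min b (u - 1 / Suc n)" by (simp add: P_def)
      moreover have "0 < 1 / real (Suc n)" by simp
      then have "l < max a (l + 1 / Suc n)" "min b (u - 1 / Suc n) < u"
        by (intro max.strict_coboundedI2 min.strict_coboundedI2, linarith)+
      ultimately show ?thesis unfolding P_def by (intro le) auto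
    qed simp
  qed
  finally show ?thesis .
qed

lemma emeasure_Ioo_finite_of_Ico:
  fixes l u K :: real
  assumes "sets M = sets (restrict_space borel {l<..<u})"
    and "\<And>a b. l < a \<Longrightarrow> a < b \<Longrightarrow> b < u \<Longrightarrow> emeasure M {a..<b} \<le> ennreal K"
  shows "emeasure M {l<..<u} < \<infinity>"
proof -
  have "emeasure M ({l<..<u} \<inter> {l..<u}) \<le> ennreal K"
    using assms by (intro emeasure_Ioo_Int_Ico_le)
  moreover have "{l<..<u} \<inter> {l..<u} = {l<..<u}" by auto
  ultimately show ?thesis by (simp add: le_less_trans)
qed

lemma emeasure_Ioo_le_of_Ico:
  fixes l u :: real
  assumes sets_M: "sets M = sets (restrict_space borel {l<..<u})"
    and sets_N: "sets N = sets (restrict_space borel {l<..<u})"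
    and fin: "emeasure N {l<..<u} \<noteq> \<infinity>"
    and le: "\<And>a b. l < a \<Longrightarrow> a < b \<Longrightarrow> b < u \<Longrightarrow> emeasure M {a..<b} \<le> emeasure N {a..<b}"
    and A: "A \<in> sets M"
  shows "emeasure M A \<le> emeasure N A"
proof (rule emeasure_le_of_semiring_generator[OF semiring_of_sets_Int_Ico _ _ _ fin _ A])
  show "{l<..<u} \<in> range (\<lambda>(a, b). {l<..<u} \<inter> {a..<b})"
    by (rule image_eqI[of _ _ "(l, u)"]) auto
  show "sets M = sigma_sets {l<..<u} (range (\<lambda>(a, b). {l<..<u} \<inter> {a..<b}))"
    "sets N = sigma_sets {l<..<u} (range (\<lambda>(a, b). {l<..<u} \<inter> {a..<b}))"
    using sets_M sets_N by (simp_all add: sets_restrict_space_borel_Int_Ico)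
  fix X assume "X \<in> range (\<lambda>(a, b). {l<..<u} \<inter> {a..<b})"
  then obtain a b where X: "X = {l<..<u} \<inter> {a..<b}" by auto
  have "X \<in> sets N"
    unfolding X sets_N by (subst sets_restrict_space_iff) auto
  show "emeasure M X \<le> emeasure N X"
    unfolding X using sets_M
  proof (rule emeasure_Ioo_Int_Ico_le)
    fix a' b' assume "a \<le> a'" "b' \<le> b" "l < a'" "a' < b'" "b' < u"
    then have "emeasure N {a'..<b'} \<le> emeasure N X"
      using \<open>X \<in> sets N\<close> by (intro emeasure_mono) (auto simp: X)
    then show "emeasure M {a'..<b'} \<le> emeasure N ({l<..<u} \<inter> {a..<b})"
      using le \<open>l < a'\<close> \<open>a' < b'\<close> \<open>b' < u\<close> X by (metis order_trans)
  qed
qed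

section \<open>Positive variation\<close>

lemma is_partition_mono:
  assumes P: "is_partition a b m t" and ij: "i \<le> j" "j \<le> m"
  shows "t i \<le> t j"
  using ij
proof (induction j)
  case (Suc j)
  show ?case
  proof (cases "i = Suc j")
    case False
    then have "t i \<le> t j" using Suc by auto
    also have "t j < t (Suc j)" using P Suc.prems by (auto simp: is_partition_def)
    finally show ?thesis by simp
  qed simp
qed simp

lemma is_partition_range:
  assumes "is_partition a b m t" "i \<le> m"
  shows "a \<le> t i" "t i \<le> b"
  using is_partition_mono[OF assms(1), of 0 i] is_partition_mono[OF assms(1), of i m] assms
  by (auto simp: is_partition_def)

lemma is_partition_two_points: "a < b \<Longrightarrow> is_partition a b 1 (\<lambda>i. if i = 0 then a else b)"
  by (simp add: is_partition_def)

lemma pos_var_same: "pos_var g a a = 0"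
proof -
  have "m = 0" if P: "is_partition a a m t" for m t
  proof (rule ccontr)
    assume "m \<noteq> 0"
    then have "t 0 < t 1" "t 1 \<le> t m"
      using P is_partition_mono[OF P, of 1 m] by (auto simp: is_partition_def)
    then show False using P by (auto simp: is_partition_def)
  qed
  then have "{(\<Sum>i\<in>{1..m}. max (g (t i) - g (t (i - 1))) 0) | m t. is_partition a a m t} = {0}"
    by (auto intro!: exI[of _ 0] exI[of _ "\<lambda>_. a"] simp: is_partition_def)
  then show ?thesis by (simp add: pos_var_def)
qed

lemma bdd_above_pos_var_sums:
  assumes "bounded_variation_on g S" "{a..b} \<subseteq> S"
  shows "bdd_above {(\<Sum>i\<in>{1..m}. max (g (t i) - g (t (i - 1))) 0) | m t. is_partition a b m t}"
proof -
  obtain B where B: "\<And>m t. \<forall>i\<le>m. t i \<in> S \<Longrightarrow> \<forall>i<m. t i < t (Suc i) \<Longrightarrow>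
      (\<Sum>i\<in>{1..m}. \<bar>g (t i) - g (t (i - 1))\<bar>) \<le> B"
    using assms(1) unfolding bounded_variation_on_def by blast
  have "(\<Sum>i\<in>{1..m}. max (g (t i) - g (t (i - 1))) 0) \<le> B" if P: "is_partition a b m t" for m t
  proof -
    have "(\<Sum>i\<in>{1..m}. max (g (t i) - g (t (i - 1))) 0) \<le> (\<Sum>i\<in>{1..m}. \<bar>g (t i) - g (t (i - 1))\<bar>)"
      by (intro sum_mono) auto
    also have "\<dots> \<le> B"
      using P assms(2) is_partition_range[OF P] by (intro B) (auto simp: is_partition_def)
    finally show ?thesis .
  qed
  then show ?thesis by (auto simp: bdd_above_def)
qed

lemma max_increment_le_pos_var:
  assumes "bounded_variation_on g S" "{a..b} \<subseteq> S" "a \<le> b"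
  shows "max (g b - g a) 0 \<le> pos_var g a b"
proof (cases "a = b")
  case False
  then have "max (g b - g a) 0 \<in> {(\<Sum>i\<in>{1..m}. max (g (t i) - g (t (i - 1))) 0) | m t. is_partition a b m t}"
    using assms(3) is_partition_two_points[of a b] by (intro CollectI exI[of _ 1] exI) auto
  then show ?thesis
    unfolding pos_var_def using bdd_above_pos_var_sums[OF assms(1,2)] by (rule cSup_upper)
qed (simp add: pos_var_same)

lemma pos_var_le_telescope:
  fixes F :: "real \<Rightarrow> real"
  assumes "a < b"
    and step: "\<And>x y. a \<le> x \<Longrightarrow> x < y \<Longrightarrow> y \<le> b \<Longrightarrow> max (g y - g x) 0 \<le> F y - F x"
  shows "pos_var g a b \<le> F b - F a"
  unfolding pos_var_def
proof (rule cSup_least)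
  show "{(\<Sum>i\<in>{1..m}. max (g (t i) - g (t (i - 1))) 0) | m t. is_partition a b m t} \<noteq> {}"
    using is_partition_two_points[OF assms(1)] by blast
  fix s assume "s \<in> {(\<Sum>i\<in>{1..m}. max (g (t i) - g (t (i - 1))) 0) | m t. is_partition a b m t}"
  then obtain m t where s: "s = (\<Sum>i\<in>{1..m}. max (g (t i) - g (t (i - 1))) 0)"
    and P: "is_partition a b m t" by blast
  have "max (g (t i) - g (t (i - 1))) 0 \<le> F (t i) - F (t (i - 1))" if "i \<in> {1..m}" for i
  proof (rule step)
    show "a \<le> t (i - 1)" "t i \<le> b" using is_partition_range[OF P] that by auto
    show "t (i - 1) < t i" using P that by (auto simp: is_partition_def dest: spec[of _ "i - 1"])
  qed
  then have "s \<le> (\<Sum>i\<in>{1..m}. F (t i) - F (t (i - 1)))"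
    unfolding s by (rule sum_mono)
  also have "\<dots> = F (t m) - F (t 0)"
    by (induction m) auto
  finally show "s \<le> F b - F a" using P by (simp add: is_partition_def)
qed

lemma tendsto_Sup_at_right_of_antimono:
  fixes h :: "real \<Rightarrow> real"
  assumes "r < b"
    and anti: "\<And>x y. r < x \<Longrightarrow> x \<le> y \<Longrightarrow> y < b \<Longrightarrow> h y \<le> h x"
    and bdd: "bdd_above (h ` {r<..<b})"
  shows "(h \<longlongrightarrow> Sup (h ` {r<..<b})) (at_right r)"
proof (rule order_tendstoI)
  fix y assume "y < Sup (h ` {r<..<b})"
  then obtain u where u: "r < u" "u < b" "y < h u"
    using less_cSup_iff[OF _ bdd] \<open>r < b\<close> by auto
  have "\<forall>x. r < x \<and> x < u \<longrightarrow> y < h x"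
    using u anti[of _ u] by (auto intro: less_le_trans)
  then show "eventually (\<lambda>x. y < h x) (at_right r)"
    using u(1) unfolding eventually_at_right_field by blast
next
  fix y assume "Sup (h ` {r<..<b}) < y"
  moreover have "h x \<le> Sup (h ` {r<..<b})" if "r < x" "x < b" for x
    using bdd that by (intro cSup_upper) auto
  ultimately have "\<forall>x. r < x \<and> x < b \<longrightarrow> h x < y"
    by fastforce
  then show "eventually (\<lambda>x. h x < y) (at_right r)"
    using assms(1) unfolding eventually_at_right_field by blast
qed

lemma interval_null_of_Ico_null:
  fixes I :: "real set"
  assumes "is_interval I" "I \<in> sets M"
    and lt: "\<And>x. x \<in> I \<Longrightarrow> x < q"
    and null: "\<And>x. x \<in> I \<Longrightarrow> {x..<q} \<in> null_sets M"
  shows "I \<in> null_sets M"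
proof -
  let ?X = "I \<inter> insert (Inf I) \<rat>"
  have cover: "I \<subseteq> (\<Union>x\<in>?X. {x..<q})"
  proof
    fix y assume y: "y \<in> I"
    show "y \<in> (\<Union>x\<in>?X. {x..<q})"
    proof (cases "\<exists>z\<in>I. z < y")
      case True
      then obtain z where z: "z \<in> I" "z < y" by blast
      obtain p where p: "p \<in> \<rat>" "z < p" "p < y" using Rats_dense_in_real[OF z(2)] by blast
      have "p \<in> I" using mem_is_interval_1_I[OF assms(1) z(1) y] p by auto
      then show ?thesis using p y lt by (intro UN_I[of p]) auto
    next
      case False
      then have "Inf I = y" using y by (intro cInf_eq_minimum) (auto simp: not_less)
      then show ?thesis using y lt by auto
    qed
  qed
  have "countable ?X" by (auto intro: countable_subset[OF _ countable_insert[OF countable_rat]])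
  then have "(\<Union>x\<in>?X. {x..<q}) \<in> null_sets M" using null by (intro null_sets_UN') auto
  then show ?thesis using assms(2) cover by (rule null_sets_subset)
qed

section \<open>Gap and contact set\<close>

locale majorant =
  fixes T C :: real and f g :: "real \<Rightarrow> real"
  assumes T_pos: "T > 0"
    and f_mono: "mono_on {0<..<T} f"
    and f_left_cont: "\<forall>t\<in>{0<..<T}. (f \<longlongrightarrow> f t) (at_left t)"
    and g_left_cont: "\<forall>t\<in>{0<..<T}. (g \<longlongrightarrow> g t) (at_left t)"
    and g_bounded: "bounded (g ` {0<..<T})"
    and f_ge_g: "\<forall>t\<in>{0<..<T}. f t \<ge> g t"
    and C_pos: "C > 0"
    and gap_persists: "\<forall>\<epsilon>>0. \<forall>t\<in>{0<..<T}. f t > g t + \<epsilon> \<longrightarrow>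
              (\<forall>t'\<in>{0<..<T}. 0 \<le> t' - t \<and> t' - t < \<epsilon> / C \<longrightarrow> f t' = f t \<and> f t' > g t')"
    and gap_slope: "\<forall>a b. {a..<b} \<subseteq> {t\<in>{0<..<T}. f t > g t} \<longrightarrow>
               (\<forall>t1 t2. a \<le> t1 \<and> t1 < t2 \<and> t2 < b \<longrightarrow> g t2 - g t1 \<le> C * (t2 - t1))"
begin

definition gap :: "real set" where
  "gap = {t\<in>{0<..<T}. f t > g t}"

definition contact :: "real set" where
  "contact = {t\<in>{0<..<T}. f t = g t}"

lemma gap_or_contact: "t \<in> {0<..<T} \<Longrightarrow> t \<in> gap \<or> t \<in> contact"
  using f_ge_g by (auto simp: gap_def contact_def less_le)

lemma gap_Int_contact: "gap \<inter> contact = {}"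
  by (auto simp: gap_def contact_def)

lemma gap_subset: "gap \<subseteq> {0<..<T}" and contact_subset: "contact \<subseteq> {0<..<T}"
  by (auto simp: gap_def contact_def)

lemma f_le: "0 < x \<Longrightarrow> x \<le> y \<Longrightarrow> y < T \<Longrightarrow> f x \<le> f y"
  using f_mono by (auto simp: mono_on_def)

lemma g_slope_le:
  assumes "{a..<b} \<subseteq> gap" "a \<le> t1" "t1 < t2" "t2 < b"
  shows "g t2 - g t1 \<le> C * (t2 - t1)"
  using gap_slope assms unfolding gap_def by blast

lemma gap_right_nbhd:
  assumes "t \<in> gap"
  shows "\<exists>\<delta>>0. \<forall>t'. t \<le> t' \<and> t' < t + \<delta> \<longrightarrow> f t' = f t \<and> t' \<in> gap"
proof -
  define \<epsilon> where "\<epsilon> = (f t - g t) / 2"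
  have t: "0 < t" "t < T" "g t < f t" using assms by (auto simp: gap_def)
  then have \<epsilon>: "\<epsilon> > 0" "f t > g t + \<epsilon>" by (auto simp: \<epsilon>_def field_simps)
  define \<delta> where "\<delta> = min (\<epsilon> / C) (T - t)"
  show ?thesis
  proof (intro exI[of _ \<delta>] conjI allI impI)
    show "\<delta> > 0" using \<epsilon> C_pos t by (auto simp: \<delta>_def)
    fix t' assume t': "t \<le> t' \<and> t' < t + \<delta>"
    then have t'T: "t' \<in> {0<..<T}" using t by (auto simp: \<delta>_def)
    have "t' - t < \<epsilon> / C" using t' by (auto simp: \<delta>_def)
    then have "f t' = f t \<and> f t' > g t'"
      using gap_persists[rule_format, OF \<epsilon>(1) _ \<epsilon>(2) t'T] t t' by auto
    then show "f t' = f t" "t' \<in> gap" using t'T by (auto simp: gap_def)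
  qed
qed

text \<open>Let \<open>w\<close> be the supremum of the points of \<open>[x, y]\<close> where \<open>f\<close> still equals \<open>f x\<close>.
  Left continuity gives \<open>f w = f x\<close>, and if \<open>w < y\<close> then \<open>w \<in> gap\<close>, so \<open>gap_right_nbhd\<close>
  pushes the plateau beyond \<open>w\<close>.\<close>
lemma f_eq_if_Ico_subset_gap:
  assumes xy: "0 < x" "x \<le> y" "y < T" and sub: "{x..<y} \<subseteq> gap"
  shows "f y = f x"
proof -
  define S where "S = {z\<in>{x..y}. f z = f x}"
  define w where "w = Sup S"
  have S: "S \<noteq> {}" "bdd_above S" using xy by (auto simp: S_def bdd_above_def)
  have w: "x \<le> w" "w \<le> y"
    using S unfolding w_def by (auto intro!: cSup_upper cSup_least simp: S_def)
  have below_w: "f z = f x" if z: "x \<le> z" "z < w" for z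
  proof -
    obtain s where s: "s \<in> S" "z < s" using less_cSup_iff[OF S] z by (auto simp: w_def)
    have "f x \<le> f z" using f_le[of x z] xy z w by auto
    moreover have "f z \<le> f s" using f_le[of z s] xy z s by (auto simp: S_def)
    ultimately show ?thesis using s by (auto simp: S_def)
  qed
  have fw: "f w = f x"
  proof (cases "w = x")
    case False
    then have "x < w" using w by auto
    have "(f \<longlongrightarrow> f w) (at_left w)" using f_left_cont w xy by auto
    moreover have "eventually (\<lambda>z. f z = f x) (at_left w)"
      using eventually_at_left_real[OF \<open>x < w\<close>] by (rule eventually_mono) (auto intro: below_w)
    ultimately have "((\<lambda>_. f x) \<longlongrightarrow> f w) (at_left w)"
      by (rule Lim_transform_eventually)
    from tendsto_unique[OF trivial_limit_at_left_real this tendsto_const] show ?thesis by simp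
  qed simp
  have "w = y"
  proof (rule ccontr)
    assume "w \<noteq> y"
    then have "w < y" "w \<in> gap" using sub w by auto
    then obtain \<delta> where \<delta>: "\<delta> > 0" "\<forall>t'. w \<le> t' \<and> t' < w + \<delta> \<longrightarrow> f t' = f w \<and> t' \<in> gap"
      using gap_right_nbhd by blast
    have "min (w + \<delta> / 2) y \<in> S" using \<delta> fw w \<open>w < y\<close> by (auto simp: S_def)
    then have "min (w + \<delta> / 2) y \<le> w" unfolding w_def using S(2) by (rule cSup_upper)
    then show False using \<delta> \<open>w < y\<close> by auto
  qed
  then show ?thesis using fw by simp
qed

lemma first_contact:
  assumes ab: "0 < a" "a \<le> b" "b < T" and ne: "contact \<inter> {a..b} \<noteq> {}"
  obtains q where "a \<le> q" "q \<le> b" "q \<in> contact" "{a..<q} \<subseteq> gap"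
proof -
  define q where "q = Inf (contact \<inter> {a..b})"
  have bdd: "bdd_below (contact \<inter> {a..b})" by (auto simp: bdd_below_def)
  have q: "a \<le> q" "q \<le> b" using ne bdd by (auto simp: q_def intro: cInf_greatest cInf_lower2)
  have below_q: "z \<in> gap" if "a \<le> z" "z < q" for z
  proof (rule ccontr)
    assume "z \<notin> gap"
    then have "z \<in> contact \<inter> {a..b}" using gap_or_contact[of z] that q ab by auto
    then have "q \<le> z" unfolding q_def using bdd by (rule cInf_lower)
    then show False using that by simp
  qed
  have "q \<in> contact"
  proof (rule ccontr)
    assume "q \<notin> contact"
    then have "q \<in> gap" using gap_or_contact[of q] q ab by auto
    then obtain \<delta> where \<delta>: "\<delta> > 0" "\<forall>t'. q \<le> t' \<and> t' < q + \<delta> \<longrightarrow> f t' = f q \<and> t' \<in> gap"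
      using gap_right_nbhd by blast
    obtain z where z: "z \<in> contact \<inter> {a..b}" "z < q + \<delta>"
      using cInf_less_iff[OF ne bdd, of "q + \<delta>"] \<delta>(1) by (auto simp: q_def)
    have "q \<le> z" using z bdd by (auto simp: q_def intro: cInf_lower)
    then show False using z \<delta>(2) gap_Int_contact by auto
  qed
  with q below_q show thesis by (intro that) auto
qed

lemma last_contact:
  assumes ab: "0 < a" "a \<le> b" "b < T" and ne: "contact \<inter> {a..b} \<noteq> {}"
  obtains r where "a \<le> r" "r \<le> b" "r \<in> contact" "{r<..b} \<subseteq> gap"
proof -
  define r where "r = Sup (contact \<inter> {a..b})"
  have bdd: "bdd_above (contact \<inter> {a..b})" by (auto simp: bdd_above_def)
  have r: "a \<le> r" "r \<le> b" using ne bdd by (auto simp: r_def intro: cSup_least cSup_upper2)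
  have above_r: "z \<in> gap" if "r < z" "z \<le> b" for z
  proof (rule ccontr)
    assume "z \<notin> gap"
    then have "z \<in> contact \<inter> {a..b}" using gap_or_contact[of z] that r ab by auto
    then have "z \<le> r" unfolding r_def using bdd by (rule cSup_upper)
    then show False using that by simp
  qed
  have "r \<in> contact"
  proof (rule ccontr)
    assume "r \<notin> contact"
    then have "r \<in> gap" using gap_or_contact[of r] r ab by auto
    then have pos: "0 < f r - g r" and rT: "r \<in> {0<..<T}" by (auto simp: gap_def)
    have "((\<lambda>z. f z - g z) \<longlongrightarrow> f r - g r) (at_left r)"
      using f_left_cont g_left_cont rT by (auto intro: tendsto_diff)
    from order_tendstoD(1)[OF this pos]
    have "eventually (\<lambda>z. 0 < f z - g z) (at_left r)" .
    then obtain b' where b': "b' < r" "\<And>z. b' < z \<Longrightarrow> z < r \<Longrightarrow> 0 < f z - g z"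
      unfolding eventually_at_left_field by blast
    obtain z where z: "z \<in> contact \<inter> {a..b}" "b' < z"
      using less_cSup_iff[OF ne bdd, of b'] b'(1) by (auto simp: r_def)
    have "z \<le> r" using z bdd by (auto simp: r_def intro: cSup_upper)
    moreover have "z \<noteq> r" using z \<open>r \<notin> contact\<close> by auto
    ultimately show False using b'(2)[of z] z by (auto simp: contact_def)
  qed
  with r above_r show thesis by (intro that) auto
qed

text \<open>On a gap \<open>t \<mapsto> g t - C t\<close> is nonincreasing and bounded.\<close>
lemma g_right_limit_exists:
  assumes "0 < r" "r < b" "b < T" and sub: "{r<..b} \<subseteq> gap"
  obtains L where "(g \<longlongrightarrow> L) (at_right r)"
proof -
  define h where "h t = g t - C * t" for t
  have "(h \<longlongrightarrow> Sup (h ` {r<..<b})) (at_right r)"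
  proof (rule tendsto_Sup_at_right_of_antimono)
    fix x y assume "r < x" "x \<le> y" "y < b"
    moreover have "g y - g x \<le> C * (y - x)" if "x < y"
      using sub that \<open>r < x\<close> \<open>y < b\<close> by (intro g_slope_le[of x b]) auto
    ultimately show "h y \<le> h x" by (cases "x = y") (auto simp: h_def algebra_simps)
  next
    obtain M where M: "\<forall>t\<in>{0<..<T}. \<bar>g t\<bar> \<le> M"
      using g_bounded unfolding bounded_iff by auto
    have "h t \<le> M - C * r" if "r < t" "t < b" for t
    proof -
      have "g t \<le> M" using M[rule_format, of t] that assms by auto
      moreover have "C * r \<le> C * t" using C_pos that by simp
      ultimately show ?thesis by (simp add: h_def)
    qed
    then show "bdd_above (h ` {r<..<b})" by (intro bdd_aboveI2[where M="M - C * r"]) auto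
  qed (fact \<open>r < b\<close>)
  then have "((\<lambda>t. h t + C * t) \<longlongrightarrow> Sup (h ` {r<..<b}) + C * r) (at_right r)"
    by (intro tendsto_intros)
  then show thesis by (intro that) (simp add: h_def)
qed

definition gap_left_of :: "real \<Rightarrow> real set" where
  "gap_left_of q = {x. x < q \<and> {x..q} \<subseteq> gap}"

lemma gap_left_of_subset: "gap_left_of q \<subseteq> gap"
  unfolding gap_left_of_def by auto

lemma gap_eq_UN_gap_left_of: "gap = (\<Union>q\<in>\<rat>. gap_left_of q)"
proof
  show "gap \<subseteq> (\<Union>q\<in>\<rat>. gap_left_of q)"
  proof
    fix t assume "t \<in> gap"
    then obtain \<delta> where \<delta>: "\<delta> > 0" "\<forall>t'. t \<le> t' \<and> t' < t + \<delta> \<longrightarrow> f t' = f t \<and> t' \<in> gap"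
      using gap_right_nbhd by blast
    obtain q where q: "q \<in> \<rat>" "t < q" "q < t + \<delta>" using Rats_dense_in_real[of t "t + \<delta>"] \<delta> by auto
    then have "t \<in> gap_left_of q" using \<delta> by (auto simp: gap_left_of_def)
    then show "t \<in> (\<Union>q\<in>\<rat>. gap_left_of q)" using q by auto
  qed
qed (use gap_left_of_subset in auto)

lemma is_interval_gap_left_of: "is_interval (gap_left_of q)"
  unfolding is_interval_1 gap_left_of_def by (auto simp: subset_eq)

lemma gap_left_of_borel: "gap_left_of q \<in> sets borel"
  by (rule real_interval_borel_measurable[OF is_interval_gap_left_of])

lemma gap_borel: "gap \<in> sets borel"
  unfolding gap_eq_UN_gap_left_of using gap_left_of_borel countable_rat by (intro sets.countable_UN'') auto

lemma gap_left_of_plateau: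
  assumes "x \<in> gap_left_of q"
  shows "0 < x" "x < q" "q < T" "f q = f x"
proof -
  have "x < q" "{x..q} \<subseteq> gap" using assms by (auto simp: gap_left_of_def)
  then have "x \<in> gap" "q \<in> gap" by auto
  then show "0 < x" "x < q" "q < T" using gap_subset \<open>x < q\<close> by auto
  moreover have "{x..<q} \<subseteq> gap" using \<open>{x..q} \<subseteq> gap\<close> by auto
  ultimately show "f q = f x" by (intro f_eq_if_Ico_subset_gap) auto
qed

definition gap_length :: "real \<Rightarrow> real \<Rightarrow> real" where
  "gap_length a b = measure lborel ({a..<b} \<inter> gap)"

lemma emeasure_gap_Ico_finite: "emeasure lborel ({a..<b} \<inter> gap) \<noteq> \<infinity>"
proof -
  have "emeasure lborel ({a..<b} \<inter> gap) \<le> emeasure lborel {a..<b}"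
    using gap_borel by (intro emeasure_mono) auto
  also have "\<dots> < \<infinity>" by (cases "a \<le> b") auto
  finally show ?thesis by simp
qed

lemma emeasure_gap_Ico: "emeasure lborel ({a..<b} \<inter> gap) = ennreal (gap_length a b)"
  unfolding gap_length_def
  by (intro emeasure_eq_ennreal_measure) (use emeasure_gap_Ico_finite in auto)

lemma gap_length_nonneg: "0 \<le> gap_length a b"
  by (simp add: gap_length_def)

lemma gap_length_add:
  assumes "a \<le> c" "c \<le> b"
  shows "gap_length a b = gap_length a c + gap_length c b"
proof -
  have "{a..<b} \<inter> gap = ({a..<c} \<inter> gap) \<union> ({c..<b} \<inter> gap)" using assms by auto
  then show ?thesis
    using gap_borel emeasure_gap_Ico_finite[of a c] emeasure_gap_Ico_finite[of c b]
    unfolding gap_length_def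
    by (simp only:) (rule measure_Union, auto)
qed

lemma gap_length_ge:
  assumes "a \<le> q" "q \<le> b" "{a..<q} \<subseteq> gap"
  shows "q - a \<le> gap_length a b"
proof -
  have "a \<le> b" using assms by simp
  have "measure lborel {a..<q} \<le> gap_length a b"
    unfolding gap_length_def using assms \<open>a \<le> b\<close> gap_borel emeasure_gap_Ico_finite[of a b]
    by (intro measure_mono_fmeasurable) (auto simp: fmeasurable_def less_top)
  then show ?thesis using assms by simp
qed

lemma gap_length_le:
  assumes "a \<le> b"
  shows "gap_length a b \<le> b - a"
proof -
  have "measure lborel ({a..<b} \<inter> gap) \<le> measure lborel {a..<b}"
    using gap_borel assms by (intro measure_mono_fmeasurable) (auto simp: fmeasurable_def)
  then show ?thesis using assms by (simp add: gap_length_def)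
qed

text \<open>Up to the first contact point \<open>q\<close> after \<open>s\<close>, the slope bound controls \<open>g\<close>; after it,
  \<open>g \<le> f\<close> and \<open>g q = f q = f s\<close> do.\<close>
lemma g_increment_le:
  assumes s: "0 < s" "s < s'" "s' < T"
  shows "g s' - g s \<le> f s' - f s + C * gap_length s s'"
proof -
  obtain q where q: "s \<le> q" "q \<le> s'" "{s..<q} \<subseteq> gap" "g s' - g q \<le> f s' - f s"
  proof (cases "contact \<inter> {s..s'} = {}")
    case True
    have "{s..<s'} \<subseteq> gap"
    proof
      fix x assume "x \<in> {s..<s'}"
      then show "x \<in> gap" using True gap_or_contact[of x] s by auto
    qed
    then show thesis using f_le[of s s'] s by (intro that[of s']) auto
  next
    case False
    then obtain q where q: "s \<le> q" "q \<le> s'" "q \<in> contact" "{s..<q} \<subseteq> gap"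
      using s by (elim first_contact) auto
    have "f q = f s" using q s by (intro f_eq_if_Ico_subset_gap) auto
    moreover have "g s' \<le> f s'" "g q = f q" using f_ge_g s q(3) by (auto simp: contact_def)
    ultimately show thesis using q by (intro that[of q]) auto
  qed
  have "g q - g s \<le> C * (q - s)"
  proof (cases "s = q")
    case False
    have "(g \<longlongrightarrow> g q) (at_left q)" using g_left_cont q s by auto
    moreover have "((\<lambda>t. g s + C * (t - s)) \<longlongrightarrow> g s + C * (q - s)) (at_left q)"
      by (intro tendsto_intros)
    moreover have "eventually (\<lambda>t. g t \<le> g s + C * (t - s)) (at_left q)"
      unfolding eventually_at_left_field using False q g_slope_le[OF q(3), of s] by force
    ultimately have "g q \<le> g s + C * (q - s)"
      using tendsto_le[OF trivial_limit_at_left_real] by blast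
    then show ?thesis by simp
  qed simp
  also have "\<dots> \<le> C * gap_length s s'"
    using gap_length_ge[OF q(1-3)] C_pos by simp
  finally show ?thesis using q(4) by linarith
qed

end

section \<open>Comparison with the derivative measures\<close>

locale majorant_pos_var = majorant +
  fixes Dgp :: "real measure"
  assumes g_bv: "bounded_variation_on g {0<..<T}"
    and Dgp_sets: "sets Dgp = sets (restrict_space borel {0<..<T})"
    and Dgp_Ico: "\<forall>a b. 0 < a \<and> a < b \<and> b < T \<longrightarrow> emeasure Dgp {a..<b} = ennreal (pos_var g a b)"
    and jump: "\<forall>t\<in>{0<..<T}. Lim (at_right t) f - f t = max (Lim (at_right t) g - g t) 0"
begin

lemma increment_le_pos_var:
  assumes "0 < a" "a \<le> b" "b < T"
  shows "g b - g a \<le> pos_var g a b" "0 \<le> pos_var g a b"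
proof -
  have "{a..b} \<subseteq> {0<..<T}" using assms by auto
  then show "g b - g a \<le> pos_var g a b" "0 \<le> pos_var g a b"
    using max_increment_le_pos_var[OF g_bv _ \<open>a \<le> b\<close>] by auto
qed

text \<open>Additivity of the positive variation is read off from the measure \<open>Dgp\<close> rather than
  proved by merging partitions.\<close>
lemma pos_var_add:
  assumes "0 < a" "a \<le> c" "c \<le> b" "b < T"
  shows "pos_var g a b = pos_var g a c + pos_var g c b"
proof (cases "a = c \<or> c = b")
  case False
  then have "a < c" "c < b" using assms by auto
  have sets: "{a..<c} \<in> sets Dgp" "{c..<b} \<in> sets Dgp"
    unfolding Dgp_sets using assms by (auto simp: sets_restrict_space_iff)
  have "{a..<b} = {a..<c} \<union> {c..<b}" using assms by auto
  then have "emeasure Dgp {a..<b} = emeasure Dgp {a..<c} + emeasure Dgp {c..<b}"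
    using sets by (simp add: plus_emeasure)
  then have "ennreal (pos_var g a b) = ennreal (pos_var g a c + pos_var g c b)"
    using Dgp_Ico assms \<open>a < c\<close> \<open>c < b\<close> increment_le_pos_var(2) by (simp add: ennreal_plus)
  then show ?thesis
    using increment_le_pos_var(2) assms by (subst (asm) ennreal_inj) auto
qed (auto simp: pos_var_same)

lemma pos_var_mono:
  assumes "0 < a" "a \<le> c" "c \<le> d" "d \<le> b" "b < T"
  shows "pos_var g c d \<le> pos_var g a b"
  using pos_var_add[of a c b] pos_var_add[of c d b] increment_le_pos_var(2)[of a c]
    increment_le_pos_var(2)[of d b] assms by auto

text \<open>Past the last contact point \<open>r\<close> the function \<open>f\<close> is constant, so its increment is the jump
  \<open>f(r\<^sup>+) - f r = [g(r\<^sup>+) - g r]\<^sup>+\<close>, and \<open>g(r\<^sup>+) - g r\<close> is a limit of increments of \<open>g\<close> on \<open>[r, b]\<close>.\<close>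
lemma f_increment_after_last_contact:
  assumes r: "r \<in> contact" "r \<le> b" "b < T" and sub: "{r<..b} \<subseteq> gap"
  shows "f b - f r \<le> pos_var g r b"
proof (cases "r = b")
  case False
  have rb: "0 < r" "r < b" using r contact_subset False by auto
  obtain L where gL: "(g \<longlongrightarrow> L) (at_right r)"
    using g_right_limit_exists[OF rb r(3) sub] .
  have "eventually (\<lambda>x. f b = f x) (at_right r)"
    unfolding eventually_at_right_field
  proof (intro exI[of _ b] conjI allI impI)
    fix x assume "r < x" "x < b"
    then show "f b = f x" using sub rb r by (intro f_eq_if_Ico_subset_gap) auto
  qed (fact rb(2))
  then have "(f \<longlongrightarrow> f b) (at_right r)" by (rule Lim_transform_eventually[OF tendsto_const])
  then have "Lim (at_right r) f = f b" by (rule tendsto_Lim[OF trivial_limit_at_right_real])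
  moreover have "Lim (at_right r) g = L" using gL by (rule tendsto_Lim[OF trivial_limit_at_right_real])
  ultimately have "f b - f r = max (L - g r) 0" using jump[rule_format, of r] rb r(3) by simp
  moreover have "L - g r \<le> pos_var g r b"
  proof (rule tendsto_le[OF trivial_limit_at_right_real])
    show "((\<lambda>x. g x - g r) \<longlongrightarrow> L - g r) (at_right r)" using gL by (intro tendsto_intros)
    have "g x - g r \<le> pos_var g r b" if "r < x" "x < b" for x
      using increment_le_pos_var(1)[of r x] pos_var_mono[of r r x b] that rb r by auto
    then show "eventually (\<lambda>x. g x - g r \<le> pos_var g r b) (at_right r)"
      unfolding eventually_at_right_field using rb by blast
  qed simp
  ultimately show ?thesis using increment_le_pos_var(2)[of r b] rb r by simp
qed (simp add: pos_var_same)

text \<open>With \<open>q\<close> and \<open>r\<close> the first and last contact points in \<open>[a, b]\<close>, \<open>f\<close> is constant on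
  \<open>[a, q]\<close> and \<open>f = g\<close> at \<open>q\<close> and \<open>r\<close>, so \<open>f b - f a = (f b - f r) + (g r - g q)\<close>.\<close>
lemma f_increment_le_pos_var:
  assumes ab: "0 < a" "a < b" "b < T"
  shows "f b - f a \<le> pos_var g a b"
proof (cases "contact \<inter> {a..b} = {}")
  case True
  have "{a..<b} \<subseteq> gap"
  proof
    fix x assume "x \<in> {a..<b}"
    then show "x \<in> gap" using True gap_or_contact[of x] ab by auto
  qed
  then have "f b = f a" using ab by (intro f_eq_if_Ico_subset_gap) auto
  then show ?thesis using increment_le_pos_var(2)[of a b] ab by simp
next
  case False
  obtain q where q: "a \<le> q" "q \<le> b" "q \<in> contact" "{a..<q} \<subseteq> gap"
    using ab False by (elim first_contact) auto
  obtain r where r: "a \<le> r" "r \<le> b" "r \<in> contact" "{r<..b} \<subseteq> gap"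
    using ab False by (elim last_contact) auto
  have "q \<le> r"
    using q(4) r(1,3) gap_Int_contact by (force simp: not_le)
  have "f q = f a" using q ab by (intro f_eq_if_Ico_subset_gap) auto
  then have "f b - f a = (f b - f r) + (g r - g q)"
    using q(3) r(3) by (simp add: contact_def)
  also have "\<dots> \<le> pos_var g r b + pos_var g q r"
    using f_increment_after_last_contact[OF r(3,2) ab(3) r(4)]
      increment_le_pos_var(1)[of q r] \<open>q \<le> r\<close> q r ab by simp
  also have "\<dots> = pos_var g q b"
    using pos_var_add[of q r b] \<open>q \<le> r\<close> q r ab by simp
  also have "\<dots> \<le> pos_var g a b"
    using pos_var_mono[of a q b b] q ab by simp
  finally show ?thesis .
qed

lemma pos_var_le_f_increment_gap:
  assumes "0 < a" "a < b" "b < T"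
  shows "pos_var g a b \<le> f b - f a + C * gap_length a b"
proof -
  have "pos_var g a b \<le> (f b + C * gap_length a b) - (f a + C * gap_length a a)"
  proof (rule pos_var_le_telescope[OF \<open>a < b\<close>])
    fix x y assume xy: "a \<le> x" "x < y" "y \<le> b"
    have "g y - g x \<le> f y - f x + C * gap_length x y"
      using xy assms by (intro g_increment_le) auto
    moreover have "0 \<le> f y - f x + C * gap_length x y"
      using f_le[of x y] xy assms C_pos gap_length_nonneg[of x y] by simp
    ultimately show "max (g y - g x) 0 \<le> (f y + C * gap_length a y) - (f x + C * gap_length a x)"
      using gap_length_add[of a x y] xy by (simp add: algebra_simps)
  qed
  then show ?thesis by (simp add: gap_length_def)
qed

end

locale majorant_Df = majorant +
  fixes Df :: "real measure"
  assumes Df_sets: "sets Df = sets (restrict_space borel {0<..<T})"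
    and Df_Ico: "\<forall>a b. 0 < a \<and> a < b \<and> b < T \<longrightarrow> emeasure Df {a..<b} = ennreal (f b - f a)"
begin

lemma sets_DfI: "X \<in> sets borel \<Longrightarrow> X \<subseteq> {0<..<T} \<Longrightarrow> X \<in> sets Df"
  unfolding Df_sets by (subst sets_restrict_space_iff) auto

lemma Df_gap_null: "emeasure Df gap = 0"
proof -
  have "gap_left_of q \<in> null_sets Df" for q
  proof (rule interval_null_of_Ico_null[OF is_interval_gap_left_of])
    show "gap_left_of q \<in> sets Df"
      using gap_left_of_borel gap_left_of_subset gap_subset by (intro sets_DfI) auto
    fix x assume x: "x \<in> gap_left_of q"
    then show "x < q" by (rule gap_left_of_plateau)
    have "emeasure Df {x..<q} = 0" using gap_left_of_plateau[OF x] Df_Ico by simp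
    then show "{x..<q} \<in> null_sets Df" using gap_left_of_plateau[OF x]
      by (auto simp: null_sets_def intro: sets_DfI)
  qed
  then have "(\<Union>q\<in>\<rat>. gap_left_of q) \<in> null_sets Df"
    using countable_rat by (intro null_sets_UN') auto
  then show ?thesis unfolding gap_eq_UN_gap_left_of[symmetric] by (rule null_setsD1)
qed

end

locale majorant_measures = majorant_pos_var T C f g Dgp + majorant_Df T C f g Df
  for T C f g Dgp Df +
  assumes f_bounded: "bounded (f ` {0<..<T})"
begin

definition gap_measure :: "real measure" where
  "gap_measure = restrict_space (density lborel (\<lambda>x. ennreal C * indicator gap x)) {0<..<T}"

lemma sets_gap_measure: "sets gap_measure = sets (restrict_space borel {0<..<T})"
  by (simp add: gap_measure_def sets_restrict_space)

lemma emeasure_gap_measure: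
  assumes "A \<in> sets borel" "A \<subseteq> {0<..<T}"
  shows "emeasure gap_measure A = ennreal C * emeasure lborel (A \<inter> gap)"
proof -
  have "emeasure gap_measure A = (\<integral>\<^sup>+ x. ennreal C * indicator gap x * indicator A x \<partial>lborel)"
    unfolding gap_measure_def using assms gap_borel
    by (simp add: emeasure_restrict_space emeasure_density)
  also have "\<dots> = (\<integral>\<^sup>+ x. ennreal C * indicator (A \<inter> gap) x \<partial>lborel)"
    by (intro nn_integral_cong) (auto split: split_indicator)
  also have "\<dots> = ennreal C * emeasure lborel (A \<inter> gap)"
    using assms gap_borel by (intro nn_integral_cmult_indicator) auto
  finally show ?thesis .
qed

lemma f_increment_bounded: "\<exists>M. \<forall>a b. 0 < a \<and> a < b \<and> b < T \<longrightarrow> f b - f a \<le> M"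
proof -
  obtain M where M: "\<forall>x\<in>{0<..<T}. \<bar>f x\<bar> \<le> M"
    using f_bounded unfolding bounded_iff by auto
  have "f b - f a \<le> 2 * M" if "0 < a" "a < b" "b < T" for a b
    using M[rule_format, of a] M[rule_format, of b] that by auto
  then show ?thesis by blast
qed

lemma Df_finite: "emeasure Df {0<..<T} \<noteq> \<infinity>"
proof -
  obtain M where "\<forall>a b. 0 < a \<and> a < b \<and> b < T \<longrightarrow> f b - f a \<le> M"
    using f_increment_bounded by blast
  then have "emeasure Df {0<..<T} < \<infinity>"
    using Df_Ico by (intro emeasure_Ioo_finite_of_Ico[OF Df_sets, of M]) (auto intro: ennreal_leI)
  then show ?thesis by simp
qed

lemma Dgp_finite: "emeasure Dgp {0<..<T} \<noteq> \<infinity>"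
proof -
  obtain M where M: "\<forall>a b. 0 < a \<and> a < b \<and> b < T \<longrightarrow> f b - f a \<le> M"
    using f_increment_bounded by blast
  have "pos_var g a b \<le> M + C * T" if "0 < a" "a < b" "b < T" for a b
  proof -
    have "C * gap_length a b \<le> C * T"
      using gap_length_le[of a b] that C_pos by (intro mult_left_mono) auto
    then show ?thesis using pos_var_le_f_increment_gap[OF that] M that by fastforce
  qed
  then have "emeasure Dgp {0<..<T} < \<infinity>"
    using Dgp_Ico by (intro emeasure_Ioo_finite_of_Ico[OF Dgp_sets, of "M + C * T"]) (auto intro: ennreal_leI)
  then show ?thesis by simp
qed

lemma Df_le_Dgp: "A \<in> sets Df \<Longrightarrow> emeasure Df A \<le> emeasure Dgp A"
  by (rule emeasure_Ioo_le_of_Ico[OF Df_sets Dgp_sets Dgp_finite])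
    (use Df_Ico Dgp_Ico f_increment_le_pos_var in \<open>auto intro: ennreal_leI\<close>)

lemma Dgp_le_Df_plus_gap_measure:
  assumes "A \<in> sets Dgp"
  shows "emeasure Dgp A \<le> emeasure Df A + emeasure gap_measure A"
proof -
  have sets_sum: "sets (add_measure Df gap_measure) = sets (restrict_space borel {0<..<T})"
    by (simp add: Df_sets)
  have sum_eq: "emeasure (add_measure Df gap_measure) X = emeasure Df X + emeasure gap_measure X"
    if "X \<in> sets Dgp" for X
    using that by (intro emeasure_add_measure) (simp_all add: sets_gap_measure Df_sets Dgp_sets)
  have "emeasure lborel ({0<..<T} \<inter> gap) \<le> emeasure lborel {0<..<T}"
    by (rule emeasure_mono) auto
  then have "emeasure lborel ({0<..<T} \<inter> gap) \<noteq> \<infinity>"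
    using T_pos by (auto simp: top_unique)
  then have "emeasure gap_measure {0<..<T} \<noteq> \<infinity>"
    using emeasure_gap_measure[of "{0<..<T}"] by (simp add: ennreal_mult_eq_top_iff)
  then have fin: "emeasure (add_measure Df gap_measure) {0<..<T} \<noteq> \<infinity>"
    using sum_eq[of "{0<..<T}"] Df_finite Dgp_sets by (simp add: sets_restrict_space_iff)
  have "emeasure Dgp {a..<b} \<le> emeasure (add_measure Df gap_measure) {a..<b}"
    if ab: "0 < a" "a < b" "b < T" for a b
  proof -
    have "{a..<b} \<in> sets Dgp" unfolding Dgp_sets using ab by (auto simp: sets_restrict_space_iff)
    moreover have "{a..<b} \<subseteq> {0<..<T}" using ab by auto
    then have "emeasure gap_measure {a..<b} = ennreal C * ennreal (gap_length a b)"
      using emeasure_gap_measure[of "{a..<b}"] by (simp add: emeasure_gap_Ico)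
    ultimately have "emeasure (add_measure Df gap_measure) {a..<b} = ennreal (f b - f a + C * gap_length a b)"
      using sum_eq Df_Ico ab f_le[of a b] C_pos gap_length_nonneg[of a b]
      by (simp add: ennreal_plus ennreal_mult)
    then show ?thesis
      using Dgp_Ico pos_var_le_f_increment_gap ab by (auto intro: ennreal_leI)
  qed
  then have "emeasure Dgp A \<le> emeasure (add_measure Df gap_measure) A"
    by (rule emeasure_Ioo_le_of_Ico[OF Dgp_sets sets_sum fin _ assms])
  then show ?thesis using sum_eq[OF assms] by simp
qed

lemma Df_eq_Dgp_on_contact:
  assumes "E \<in> sets borel" "E \<subseteq> contact"
  shows "emeasure Df E = emeasure Dgp E"
proof -
  have E: "E \<in> sets Df" "E \<in> sets Dgp" "E \<subseteq> {0<..<T}"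
    using assms contact_subset Df_sets Dgp_sets by (auto simp: sets_restrict_space_iff)
  have "E \<inter> gap = {}" using assms(2) gap_Int_contact by auto
  then have "emeasure gap_measure E = 0"
    using emeasure_gap_measure[OF assms(1) E(3)] by simp
  then show ?thesis
    using Df_le_Dgp[OF E(1)] Dgp_le_Df_plus_gap_measure[OF E(2)] by (simp add: antisym)
qed

end

theorem lemma7p1:
  fixes T C :: real and f g :: "real \<Rightarrow> real" and Df Dgp :: "real measure"
  assumes T: "T > 0"
    and f_mono: "mono_on {0<..<T} f"
    and g_bv: "bounded_variation_on g {0<..<T}"
    and f_lc: "\<forall>t\<in>{0<..<T}. (f \<longlongrightarrow> f t) (at_left t)"
    and g_lc: "\<forall>t\<in>{0<..<T}. (g \<longlongrightarrow> g t) (at_left t)"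
    and f_bdd: "bounded (f ` {0<..<T})"
    and g_bdd: "bounded (g ` {0<..<T})"
    and fg: "\<forall>t\<in>{0<..<T}. f t \<ge> g t"
    and C: "C > 0"
    and i: "\<forall>\<epsilon>>0. \<forall>t\<in>{0<..<T}. f t > g t + \<epsilon> \<longrightarrow>
              (\<forall>t'\<in>{0<..<T}. 0 \<le> t' - t \<and> t' - t < \<epsilon> / C \<longrightarrow> f t' = f t \<and> f t' > g t')"
    and ii: "\<forall>t\<in>{0<..<T}. Lim (at_right t) f - f t = max (Lim (at_right t) g - g t) 0"
    and iii: "\<forall>a b. {a..<b} \<subseteq> {t\<in>{0<..<T}. f t > g t} \<longrightarrow>
               (\<forall>t1 t2. a \<le> t1 \<and> t1 < t2 \<and> t2 < b \<longrightarrow> g t2 - g t1 \<le> C * (t2 - t1))"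
    and Df_sets: "sets Df = sets (restrict_space borel {0<..<T})"
    and Df_int: "\<forall>a b. 0 < a \<and> a < b \<and> b < T \<longrightarrow> emeasure Df {a..<b} = ennreal (f b - f a)"
    and Dgp_sets: "sets Dgp = sets (restrict_space borel {0<..<T})"
    and Dgp_int: "\<forall>a b. 0 < a \<and> a < b \<and> b < T \<longrightarrow> emeasure Dgp {a..<b} = ennreal (pos_var g a b)"
  shows "emeasure Df {t\<in>{0<..<T}. f t \<noteq> g t} = 0
         \<and> (\<forall>E. E \<in> sets borel \<and> E \<subseteq> {t\<in>{0<..<T}. f t = g t} \<longrightarrow> emeasure Df E = emeasure Dgp E)"
proof -
  interpret majorant_measures T C f g Dgp Df
    using assms by unfold_locales
  have "{t\<in>{0<..<T}. f t \<noteq> g t} = gap"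
    using fg by (auto simp: gap_def less_le)
  then show ?thesis
    using Df_gap_null Df_eq_Dgp_on_contact by (simp add: contact_def)
qed

end
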